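(* Let the standing assumptions (listed in the context) hold and let $(x_k)$ be generated by Algorithm SLBFGS. Then there is a constant $C>0$ such that $\|B_k\|+\|B_k^{-1}\|\le C\max\{1,\|\nabla\mathcal{J}(x_k)\|^{-c_2}\}$ for all $k\ge0$, where $c_2$ is the constant from Algorithm SLBFGS.
   Context: Let $\mathcal{X}$ be a Hilbert space and $\mathcal{J}:\mathcal{X}\to\mathbb{R}$. Algorithm SLBFGS (structured inverse L-BFGS): inputs $x_0\in\mathcal{X}$, $\epsilon\geq0$, $\ell\in\mathbb{N}_0$, $c_0\geq 0$, $C_0\in[c_0,\infty]$, $c_s,c_1,c_2>0$; let $\tau_0>0$. For $k=0,1,2,\ldots$: let $m=\max\{0,k-\ell\}$; choose a symmetric positive semi-definite bounded linear operator $S_k$; set $B_k^{(0)}=\tau_k I+S_k$; let $B_k$ be obtained from $B_k^{(0)}$ and the currently stored pairs $(s_j,y_j)$, $m\le j\le k-1$, by successive L-BFGS updates $B\mapsto B+\frac{yy^T}{y^Ts}-\frac{Bss^TB}{s^TBs}$; set $d_k=-B_k^{-1}\nabla\mathcal{J}(x_k)$; compute a step length $\alpha_k>0$ by a line search; set $s_k=\alpha_kd_k$, $x_{k+1}=x_k+s_k$, $y_k=\nabla\mathcal{J}(x_{k+1})-\nabla\mathcal{J}(x_k)$; store $(s_k,y_k)$ only if $y_k^Ts_k>c_s\|s_k\|^2$; if $k\ge\ell$ remove $(s_m,y_m)$ from storage; stop with output $x_{k+1}$ if $\|\nabla\mathcal{J}(x_{k+1})\|\le\epsilon$; set $z_k=y_k-S_{k+1}s_k$,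 $\omega^l_{k+1}=\min\{c_0,c_1\|\nabla\mathcal{J}(x_{k+1})\|^{c_2}\}$, $\omega^u_{k+1}=\max\{C_0,(c_1\|\nabla\mathcal{J}(x_{k+1})\|^{c_2})^{-1}\}$; with $P(t)=\min\{\max\{t,\omega^l_{k+1}\},\omega^u_{k+1}\}$ and $\rho=z_k^Ts_k$ let $\tau^s=P(\rho/\|s_k\|^2)$, $\tau^g=P(\|z_k\|/\|s_k\|)$, $\tau^z=P(\|z_k\|^2/\rho)$; if $\rho>0$ choose $\tau_{k+1}\in[\tau^s,\tau^z]$, else choose $\tau_{k+1}\in[\tau^s,\tau^g]$. Line searches: Armijo with backtracking means, for fixed $\beta,\sigma\in(0,1)$, $\alpha_k$ is the largest number in $\{1,\beta,\beta^2,\ldots\}$ with $\mathcal{J}(x_{k+1})\le\mathcal{J}(x_k)+\alpha_k\sigma\nabla\mathcal{J}(x_k)^Td_k$; the Wolfe–Powell conditions are this Armijo inequality together with $\nabla\mathcal{J}(x_{k+1})^Td_k\ge\eta\nabla\mathcal{J}(x_k)^Td_k$ for fixed $\eta\in(\sigma,1)$. Let $\Omega=\{x:\mathcal{J}(x)\le\mathcal{J}(x_0)\}$ and $\Omega_\delta=\{x:\exists\hat x\in\Omega,\ \|x-\hat x\|<\delta\}$. Standing assumptions: 1) $\mathcal{J}$ is continuously differentiable and bounded below; 2) $\nabla\mathcal{J}$ is Lipschitz continuous on $\Omega$ with constant $L>0$; 3) $(\|S_k\|)$ is bounded; 4) the step sizes consistently satisfy the Armijo condition computed by backtracking, or consistently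 satisfy the Wolfe–Powell conditions; in the Armijo case there is $\delta>0$ such that $\mathcal{J}$ or $\nabla\mathcal{J}$ is uniformly continuous on $\Omega_\delta$; 5) $c_0=0$ is only chosen if then $\sup_k\|(B_k^{(0)})^{-1}\|<\infty$; 6) $C_0=\infty$ is only chosen if either the interval $[\tau^s,\tau^z]$ is replaced by $[\tau^s,\tau^g]$, or $\mathcal{J}$ is twice continuously differentiable, $\overline{G_k}:=\int_0^1\nabla^2\mathcal{J}(x_k+ts_k)\,dt-S_{k+1}$ is symmetric positive semi-definite for all $k$ and $(\|\overline{G_k}\|)$ is bounded. *)

theory Defs
  imports "HOL-Analysis.Analysis"
begin

text \<open>Bounded linear operators on the Hilbert space are represented as functions
  'a \<Rightarrow> 'a (together with bounded_linear); their norm is the operator norm onorm.\<close>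

definition sym_op :: "('a::real_inner \<Rightarrow> 'a) \<Rightarrow> bool" where
  "sym_op A \<longleftrightarrow> (\<forall>u v. A u \<bullet> v = u \<bullet> A v)"

definition psd_op :: "('a::real_inner \<Rightarrow> 'a) \<Rightarrow> bool" where
  "psd_op A \<longleftrightarrow> (\<forall>v. 0 \<le> v \<bullet> A v)"

definition lbfgs_upd :: "('a::real_inner \<Rightarrow> 'a) \<Rightarrow> 'a \<Rightarrow> 'a \<Rightarrow> ('a \<Rightarrow> 'a)" where
  "lbfgs_upd B s y = (\<lambda>v. B v + ((y \<bullet> v) / (y \<bullet> s)) *\<^sub>R y - ((s \<bullet> B v) / (s \<bullet> B s)) *\<^sub>R B s)"

text \<open>Indices of the pairs stored at the beginning of iteration k:
  those j with max(0,k-ell) \<le> j \<le> k-1 that passed the curvature test.\<close>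
definition stored_pairs :: "nat \<Rightarrow> real \<Rightarrow> (nat \<Rightarrow> 'a::real_inner) \<Rightarrow> (nat \<Rightarrow> 'a) \<Rightarrow> nat \<Rightarrow> nat set" where
  "stored_pairs ell cs s y k = {j. k - ell \<le> j \<and> j < k \<and> y j \<bullet> s j > cs * (norm (s j))\<^sup>2}"

definition lbfgs_op :: "('a::real_inner \<Rightarrow> 'a) \<Rightarrow> (nat \<Rightarrow> 'a) \<Rightarrow> (nat \<Rightarrow> 'a) \<Rightarrow> nat set \<Rightarrow> ('a \<Rightarrow> 'a)" where
  "lbfgs_op B0 s y I = fold (\<lambda>j B. lbfgs_upd B (s j) (y j)) (sorted_list_of_set I) B0"

definition proj_box :: "ereal \<Rightarrow> ereal \<Rightarrow> ereal \<Rightarrow> ereal" where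
  "proj_box lo hi t = min (max t lo) hi"

end

theory Submission
  imports Defs
begin

text \<open>Every stored pair satisfies the curvature condition y's > c_s |s|^2, so an L-BFGS update
  keeps the operator symmetric positive definite, and its inverse is the inverse BFGS update.
  The iterates decrease J and so stay in the level set, where |y| <= L |s|; there one update
  multiplies |B| + |B^-1| + 2 (L^2 + 1) / c_s by at most 2 + (1 + L / c_s)^2, and at most ell
  updates are applied. It remains to bound the seed tau_k I + S_k. The safeguard gives
  tau_k <= C + |grad J(x_k)|^(-c2) / c1: for C0 = infinity through |z|^2 / (z's) <= |G| for
  z = G s with the averaged Hessian G, or through |z| / |s| <= L + |S| in the other variant.
  The lower bound tau_k >= min(c0, c1 |grad J(x_k)|^c2) gives |(tau_k I + S_k)^-1| <= 1 / tau_k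
  by coercivity, unless c0 = 0, where this inverse is bounded by assumption.\<close>

section \<open>Positive semidefinite operators\<close>

lemma nonneg_quadratic_discriminant:
  fixes a b c :: real
  assumes nonneg: "\<And>t. 0 \<le> a + 2*t*b + t^2*c" and "c \<ge> 0"
  shows "b^2 \<le> a*c"
proof (cases "c > 0")
  case True
  have "0 \<le> a + 2*(-b/c)*b + (-b/c)^2*c" by (rule nonneg)
  also have "\<dots> = a - b^2/c" using True by (simp add: field_simps power2_eq_square)
  finally show ?thesis using True by (simp add: field_simps mult.commute)
next
  case False
  then have "c = 0" using \<open>c \<ge> 0\<close> by simp
  moreover have "b = 0"
  proof (rule ccontr)
    assume "b \<noteq> 0"
    have "0 \<le> a + 2*(-(a+1)/(2*b))*b + (-(a+1)/(2*b))^2*c" by (rule nonneg)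
    also have "\<dots> = -1" using \<open>b \<noteq> 0\<close> \<open>c = 0\<close> by (simp add: field_simps)
    finally show False by simp
  qed
  ultimately show ?thesis by simp
qed

lemma psd_op_cauchy_schwarz:
  assumes "linear A" and "sym_op A" and "psd_op A"
  shows "(u \<bullet> A v)^2 \<le> (u \<bullet> A u) * (v \<bullet> A v)"
proof (rule nonneg_quadratic_discriminant)
  fix t :: real
  have "v \<bullet> A u = u \<bullet> A v" using \<open>sym_op A\<close> unfolding sym_op_def by (metis inner_commute)
  moreover have "0 \<le> (u + t *\<^sub>R v) \<bullet> A (u + t *\<^sub>R v)" using \<open>psd_op A\<close> unfolding psd_op_def by blast
  ultimately show "0 \<le> u \<bullet> A u + 2*t*(u \<bullet> A v) + t^2 * (v \<bullet> A v)"
    using \<open>linear A\<close> by (simp add: linear_add linear_scale inner_add_left inner_add_right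
        algebra_simps power2_eq_square)
  show "0 \<le> v \<bullet> A v" using \<open>psd_op A\<close> unfolding psd_op_def by blast
qed

lemma psd_op_norm_sq_le:
  assumes bl: "bounded_linear A" and "sym_op A" and psd: "psd_op A"
  shows "(norm (A v))^2 \<le> onorm A * (v \<bullet> A v)"
proof (cases "A v = 0")
  case True
  then show ?thesis using onorm_pos_le[OF bl] psd unfolding psd_op_def by simp
next
  case False
  have "((norm (A v))^2)^2 = (A v \<bullet> A v)^2" by (simp add: power2_norm_eq_inner)
  also have "\<dots> \<le> (A v \<bullet> A (A v)) * (v \<bullet> A v)"
    using psd_op_cauchy_schwarz[OF bounded_linear.linear[OF bl] assms(2,3)] .
  also have "\<dots> \<le> (onorm A * (norm (A v))^2) * (v \<bullet> A v)"
  proof (rule mult_right_mono)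
    have "A v \<bullet> A (A v) \<le> norm (A v) * norm (A (A v))" by (rule norm_cauchy_schwarz)
    also have "\<dots> \<le> norm (A v) * (onorm A * norm (A v))"
      by (rule mult_left_mono[OF onorm[OF bl]]) simp
    finally show "A v \<bullet> A (A v) \<le> onorm A * (norm (A v))^2"
      by (simp add: power2_eq_square algebra_simps)
    show "0 \<le> v \<bullet> A v" using psd unfolding psd_op_def by blast
  qed
  finally have "(norm (A v))^2 * (norm (A v))^2 \<le> (norm (A v))^2 * (onorm A * (v \<bullet> A v))"
    by (simp add: power2_eq_square algebra_simps)
  moreover have "(norm (A v))^2 > 0" using False by simp
  ultimately show ?thesis using mult_le_cancel_left_pos by metis
qed

lemma psd_op_norm_sq_div_le:
  assumes "bounded_linear A" and "sym_op A" and "psd_op A" and "0 < v \<bullet> A v"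
  shows "(norm (A v))^2 / (v \<bullet> A v) \<le> onorm A"
  using psd_op_norm_sq_le[OF assms(1-3), of v] assms(4) by (simp add: divide_le_eq)

lemma bounded_linear_inv:
  assumes bl: "bounded_linear A" and "bij A" and bound: "\<And>w. norm (inv A w) \<le> K * norm w"
  shows "bounded_linear (inv A)"
proof (rule bounded_linear_intro[where K=K])
  have A_inv: "A (inv A w) = w" for w using \<open>bij A\<close> by (simp add: bij_def surj_f_inv_f)
  have "inj A" using \<open>bij A\<close> bij_def by blast
  show "inv A (u + v) = inv A u + inv A v" "inv A (r *\<^sub>R u) = r *\<^sub>R inv A u" for u v r
    by (rule injD[OF \<open>inj A\<close>],
        simp add: A_inv linear_add linear_scale bounded_linear.linear[OF bl])+
  show "norm (inv A x) \<le> norm x * K" for x using bound by (simp add: mult.commute)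
qed

definition psd_invertible :: "('a::real_inner \<Rightarrow> 'a) \<Rightarrow> bool" where
  "psd_invertible B \<longleftrightarrow> bounded_linear B \<and> sym_op B \<and> psd_op B \<and> bij B \<and> bounded_linear (inv B)"

lemma psd_invertibleD:
  assumes "psd_invertible B"
  shows "bounded_linear B" "sym_op B" "psd_op B" "bounded_linear (inv B)"
    "B (inv B v) = v" "inv B (B v) = v"
  using assms unfolding psd_invertible_def
  by (auto simp: bij_is_surj bij_is_inj surj_f_inv_f inv_f_f)

lemma psd_invertibleI:
  assumes "bounded_linear B" "sym_op B" "psd_op B" "bounded_linear H"
    and "\<And>v. B (H v) = v" "\<And>v. H (B v) = v"
  shows "psd_invertible B" "inv B = H"
proof -
  have "B \<circ> H = id" "H \<circ> B = id" using assms(5,6) by auto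
  then show "inv B = H" "psd_invertible B"
    using assms(1-4) inv_unique_comp o_bij unfolding psd_invertible_def by metis+
qed

lemma psd_invertible_psd_inv:
  assumes "psd_invertible B"
  shows "psd_op (inv B)"
  unfolding psd_op_def
proof
  fix v
  have "v \<bullet> inv B v = inv B v \<bullet> B (inv B v)"
    using psd_invertibleD(5)[OF assms] by (simp add: inner_commute)
  then show "0 \<le> v \<bullet> inv B v"
    using psd_invertibleD(3)[OF assms] unfolding psd_op_def by metis
qed

lemma psd_invertible_pos:
  assumes "psd_invertible B" and "s \<noteq> 0"
  shows "0 < s \<bullet> B s"
proof -
  have "0 \<le> s \<bullet> B s" using psd_invertibleD(3)[OF assms(1)] unfolding psd_op_def by blast
  moreover have "B s \<noteq> 0"
    using psd_invertibleD(6)[OF assms(1), of s] \<open>s \<noteq> 0\<close>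
      linear_0[OF bounded_linear.linear[OF psd_invertibleD(4)[OF assms(1)]]] by auto
  then have "s \<bullet> B s \<noteq> 0"
    using psd_op_norm_sq_le[OF psd_invertibleD(1-3)[OF assms(1)], of s] by auto
  ultimately show ?thesis by simp
qed

lemma norm_inner_scaleR_le: "norm ((a \<bullet> v) *\<^sub>R b) \<le> norm a * norm b * norm v"
  using mult_left_mono[OF Cauchy_Schwarz_ineq2[of a v] norm_ge_zero[of b]] by (simp add: ac_simps)

lemma norm_mult_inner_scaleR_le:
  "norm ((c * (a \<bullet> v)) *\<^sub>R b) \<le> \<bar>c\<bar> * (norm a * norm b * norm v)"
  using mult_left_mono[OF norm_inner_scaleR_le[of a v b] abs_ge_zero[of c]]
  by (simp add: abs_mult mult.assoc)

lemma psd_op_rank_one_norm_le: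
  assumes "bounded_linear A" and "sym_op A" and "psd_op A"
  shows "norm (((s \<bullet> A v) / (s \<bullet> A s)) *\<^sub>R A s) \<le> onorm A * norm v"
proof (cases "s \<bullet> A s = 0")
  case True
  then show ?thesis using onorm_pos_le[OF assms(1)] by simp
next
  case False
  then have pos: "0 < s \<bullet> A s" using \<open>psd_op A\<close> unfolding psd_op_def by (metis order_le_less)
  have "s \<bullet> A v = A s \<bullet> v" using \<open>sym_op A\<close> unfolding sym_op_def by metis
  then have "norm (((s \<bullet> A v) / (s \<bullet> A s)) *\<^sub>R A s) = norm ((A s \<bullet> v) *\<^sub>R A s) / (s \<bullet> A s)"
    using pos by simp
  also have "\<dots> \<le> (norm (A s))^2 * norm v / (s \<bullet> A s)"
    using norm_inner_scaleR_le[of "A s" v "A s"] pos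
    by (intro divide_right_mono) (auto simp: power2_eq_square)
  also have "\<dots> \<le> onorm A * (s \<bullet> A s) * norm v / (s \<bullet> A s)"
    using psd_op_norm_sq_le[OF assms, of s] pos by (intro divide_right_mono mult_right_mono) auto
  also have "\<dots> = onorm A * norm v" using pos by simp
  finally show ?thesis .
qed

section \<open>The L-BFGS update\<close>

text \<open>Expansion of \<open>(I - r s y\<^sup>T) H (I - r y s\<^sup>T) + r s s\<^sup>T\<close> with \<open>r = 1/(y\<^sup>T s)\<close>.\<close>
definition lbfgs_inv_upd :: "('a::real_inner \<Rightarrow> 'a) \<Rightarrow> 'a \<Rightarrow> 'a \<Rightarrow> ('a \<Rightarrow> 'a)" where
  "lbfgs_inv_upd H s y = (\<lambda>w. let r = inverse (y \<bullet> s) in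
     H w - (r * (s \<bullet> w)) *\<^sub>R H y - (r * (y \<bullet> H w)) *\<^sub>R s + ((r^2 * (y \<bullet> H y) + r) * (s \<bullet> w)) *\<^sub>R s)"

lemma bounded_linear_lbfgs_upd:
  assumes "bounded_linear B"
  shows "bounded_linear (lbfgs_upd B s y)"
  unfolding lbfgs_upd_def divide_inverse
  by (intro bounded_linear_intros assms bounded_linear_compose[OF bounded_linear_inner_right assms])

lemma bounded_linear_lbfgs_inv_upd:
  assumes "bounded_linear H"
  shows "bounded_linear (lbfgs_inv_upd H s y)"
  unfolding lbfgs_inv_upd_def Let_def
  by (intro bounded_linear_intros assms bounded_linear_compose[OF bounded_linear_inner_right assms])

lemma norm_add_diff_le: "norm (a + b - c) \<le> norm a + norm b + norm c"
  using norm_triangle_ineq4[of "a + b" c] norm_triangle_ineq[of a b] by linarith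

lemma norm_diff_diff_add_le: "norm (a - b - c + d) \<le> norm a + norm b + norm c + norm d"
  using norm_triangle_ineq[of "a - b - c" d] norm_triangle_ineq4[of "a - b" c]
    norm_triangle_ineq4[of a b]
  by linarith

lemma lbfgs_upd_norm_le:
  assumes "bounded_linear B" and "sym_op B" and "psd_op B" and ys: "0 < y \<bullet> s"
  shows "norm (lbfgs_upd B s y v) \<le> (2 * onorm B + (norm y)^2 / (y \<bullet> s)) * norm v"
proof -
  have "norm (((y \<bullet> v) / (y \<bullet> s)) *\<^sub>R y) = norm ((y \<bullet> v) *\<^sub>R y) / (y \<bullet> s)"
    using ys by (simp add: abs_divide)
  also have "\<dots> \<le> norm y * norm y * norm v / (y \<bullet> s)"
    using norm_inner_scaleR_le[of y v y] ys by (simp add: divide_right_mono)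
  finally have y_term: "norm (((y \<bullet> v) / (y \<bullet> s)) *\<^sub>R y) \<le> (norm y)^2 / (y \<bullet> s) * norm v"
    by (simp add: power2_eq_square)
  have "norm (lbfgs_upd B s y v) \<le> norm (B v) + norm (((y \<bullet> v) / (y \<bullet> s)) *\<^sub>R y)
      + norm (((s \<bullet> B v) / (s \<bullet> B s)) *\<^sub>R B s)"
    unfolding lbfgs_upd_def by (rule norm_add_diff_le)
  also have "\<dots> \<le> onorm B * norm v + (norm y)^2 / (y \<bullet> s) * norm v + onorm B * norm v"
    using onorm[OF assms(1)] y_term psd_op_rank_one_norm_le[OF assms(1-3)] by (intro add_mono)
  finally show ?thesis by (simp add: algebra_simps)
qed

lemma lbfgs_inv_upd_norm_le:
  assumes bl: "bounded_linear H" and ys: "0 < y \<bullet> s"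
  shows "norm (lbfgs_inv_upd H s y w)
    \<le> (onorm H * (1 + norm y * norm s / (y \<bullet> s))^2 + (norm s)^2 / (y \<bullet> s)) * norm w"
proof -
  define r where "r = inverse (y \<bullet> s)"
  define h where "h = onorm H"
  have r: "0 < r" using ys r_def by simp
  have h: "0 \<le> h" using onorm_pos_le[OF bl] h_def by simp
  have Hv: "norm (H v) \<le> h * norm v" for v using onorm[OF bl] h_def by simp
  have "\<bar>y \<bullet> H y\<bar> \<le> norm y * (h * norm y)"
    using order_trans[OF Cauchy_Schwarz_ineq2 mult_left_mono[OF Hv norm_ge_zero]] .
  then have "\<bar>r^2 * (y \<bullet> H y)\<bar> \<le> r^2 * (norm y * (h * norm y))"
    by (simp add: abs_mult mult_left_mono)
  then have c: "\<bar>r^2 * (y \<bullet> H y) + r\<bar> \<le> r^2 * (norm y * (h * norm y)) + r"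
    using abs_triangle_ineq[of "r^2 * (y \<bullet> H y)" r] abs_of_pos[OF r] by linarith
  have "norm (lbfgs_inv_upd H s y w) \<le> norm (H w) + \<bar>r\<bar> * (norm s * norm (H y) * norm w)
      + \<bar>r\<bar> * (norm y * norm s * norm (H w))
      + \<bar>r^2 * (y \<bullet> H y) + r\<bar> * (norm s * norm s * norm w)"
    unfolding lbfgs_inv_upd_def Let_def r_def[symmetric]
    by (intro order_trans[OF norm_diff_diff_add_le] add_mono order_refl norm_mult_inner_scaleR_le)
  also have "\<dots> \<le> h * norm w + r * (norm s * (h * norm y) * norm w)
      + r * (norm y * norm s * (h * norm w))
      + (r^2 * (norm y * (h * norm y)) + r) * (norm s * norm s * norm w)"
    using Hv[of w] Hv[of y] c r h by (intro add_mono mult_mono) auto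
  also have "\<dots> = (h * (1 + r * norm y * norm s)^2 + r * (norm s)^2) * norm w"
    by (simp add: power2_eq_square algebra_simps)
  finally show ?thesis unfolding r_def h_def by (simp add: divide_inverse ac_simps)
qed

lemma sym_op_lbfgs_upd:
  assumes "sym_op B"
  shows "sym_op (lbfgs_upd B s y)"
  unfolding sym_op_def
proof (intro allI)
  fix u v
  have sym: "B a \<bullet> b = a \<bullet> B b" for a b using assms unfolding sym_op_def by blast
  have "u \<bullet> B s = s \<bullet> B u" by (metis sym inner_commute)
  then show "lbfgs_upd B s y u \<bullet> v = u \<bullet> lbfgs_upd B s y v"
    unfolding lbfgs_upd_def
    by (simp add: inner_diff_left inner_add_left inner_diff_right inner_add_right sym
        inner_commute[of u y] mult.commute)
qed

lemma psd_op_lbfgs_upd: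
  assumes "linear B" and "sym_op B" and "psd_op B" and "0 \<le> y \<bullet> s"
  shows "psd_op (lbfgs_upd B s y)"
  unfolding psd_op_def
proof
  fix v
  have "(s \<bullet> B v)^2 \<le> (s \<bullet> B s) * (v \<bullet> B v)"
    using psd_op_cauchy_schwarz[OF assms(1-3)] .
  moreover have "0 \<le> s \<bullet> B s" "0 \<le> v \<bullet> B v" using \<open>psd_op B\<close> unfolding psd_op_def by auto
  ultimately have "(s \<bullet> B v)^2 / (s \<bullet> B s) \<le> v \<bullet> B v"
    by (cases "s \<bullet> B s = 0") (auto simp: pos_divide_le_eq mult.commute)
  moreover have "0 \<le> (y \<bullet> v)^2 / (y \<bullet> s)" using \<open>0 \<le> y \<bullet> s\<close> by simp
  moreover have "v \<bullet> B s = s \<bullet> B v" using \<open>sym_op B\<close> unfolding sym_op_def by (metis inner_commute)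
  ultimately show "0 \<le> v \<bullet> lbfgs_upd B s y v"
    unfolding lbfgs_upd_def
    by (simp add: inner_add_right inner_diff_right power2_eq_square inner_commute[of v y])
qed

lemma lbfgs_upd_inv_upd:
  assumes "linear B" and BH: "\<And>v. B (H v) = v" and ys: "y \<bullet> s \<noteq> 0" and sBs: "s \<bullet> B s \<noteq> 0"
  shows "lbfgs_upd B s y (lbfgs_inv_upd H s y w) = w"
proof -
  define r where "r = inverse (y \<bullet> s)"
  define a where "a = s \<bullet> w"
  define b where "b = y \<bullet> H w"
  define c where "c = y \<bullet> H y"
  define u where "u = lbfgs_inv_upd H s y w"
  have rys: "r * (y \<bullet> s) = 1" using ys r_def by simp
  have u: "u = H w - (r * a) *\<^sub>R H y - (r * b) *\<^sub>R s + ((r^2 * c + r) * a) *\<^sub>R s"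
    unfolding u_def lbfgs_inv_upd_def Let_def r_def a_def b_def c_def ..
  have Bu: "B u = w - (r * a) *\<^sub>R y - (r * b) *\<^sub>R B s + ((r^2 * c + r) * a) *\<^sub>R B s"
    unfolding u using \<open>linear B\<close> by (simp add: linear_add linear_diff linear_scale BH)
  have "y \<bullet> u = b - r * a * c - r * b * (y \<bullet> s) + (r^2 * c + r) * a * (y \<bullet> s)"
    unfolding u by (simp add: inner_diff_right inner_add_right b_def c_def)
  also have "\<dots> = b - r * a * c - b * (r * (y \<bullet> s)) + (r * a * c + a) * (r * (y \<bullet> s))"
    by (simp add: algebra_simps power2_eq_square)
  finally have yu: "y \<bullet> u = a" using rys by simp
  have "s \<bullet> B u = a - a * (r * (y \<bullet> s)) - r * b * (s \<bullet> B s) + (r^2 * c + r) * a * (s \<bullet> B s)"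
    unfolding Bu
    by (simp add: inner_diff_right inner_add_right a_def inner_commute[of s y] algebra_simps)
  then have sBu: "s \<bullet> B u / (s \<bullet> B s) = (r^2 * c + r) * a - r * b"
    using rys sBs by (simp add: field_simps)
  show ?thesis
    unfolding u_def[symmetric] lbfgs_upd_def yu sBu
    by (simp add: Bu algebra_simps divide_inverse r_def[symmetric] a_def)
qed

lemma lbfgs_inv_upd_upd:
  assumes "linear H" and HB: "\<And>v. H (B v) = v" and ys: "y \<bullet> s \<noteq> 0" and sBs: "s \<bullet> B s \<noteq> 0"
  shows "lbfgs_inv_upd H s y (lbfgs_upd B s y v) = v"
proof -
  define r where "r = inverse (y \<bullet> s)"
  define e where "e = y \<bullet> v"
  define q where "q = s \<bullet> B v / (s \<bullet> B s)"
  define c where "c = y \<bullet> H y"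
  define u where "u = lbfgs_upd B s y v"
  have rys: "r * (y \<bullet> s) = 1" using ys r_def by simp
  have u: "u = B v + (r * e) *\<^sub>R y - q *\<^sub>R B s"
    unfolding u_def lbfgs_upd_def r_def e_def q_def by (simp add: divide_inverse mult.commute)
  have Hu: "H u = v + (r * e) *\<^sub>R H y - q *\<^sub>R s"
    unfolding u using \<open>linear H\<close> by (simp add: linear_add linear_diff linear_scale HB)
  have "s \<bullet> u = q * (s \<bullet> B s) + e * (r * (y \<bullet> s)) - q * (s \<bullet> B s)"
    unfolding u using sBs
    by (simp add: inner_diff_right inner_add_right q_def inner_commute[of s y])
  then have su: "s \<bullet> u = e" using rys by simp
  have yHu: "y \<bullet> H u = e + r * e * c - q * (y \<bullet> s)"
    unfolding Hu by (simp add: inner_diff_right inner_add_right e_def c_def)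
  have "lbfgs_inv_upd H s y u
      = H u - (r * e) *\<^sub>R H y - (r * (y \<bullet> H u)) *\<^sub>R s + ((r^2 * c + r) * e) *\<^sub>R s"
    unfolding lbfgs_inv_upd_def Let_def r_def[symmetric] c_def[symmetric] su ..
  also have "\<dots> = v - q *\<^sub>R s - (r * e + r * (r * e * c) - q * (r * (y \<bullet> s))) *\<^sub>R s
      + ((r^2 * c + r) * e) *\<^sub>R s"
    unfolding Hu yHu by (simp add: algebra_simps e_def c_def)
  also have "\<dots> = v" using rys by (simp add: algebra_simps power2_eq_square)
  finally show ?thesis unfolding u_def .
qed

lemma psd_invertible_lbfgs_upd:
  assumes "psd_invertible B" and ys: "0 < y \<bullet> s"
  shows "psd_invertible (lbfgs_upd B s y)" "inv (lbfgs_upd B s y) = lbfgs_inv_upd (inv B) s y"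
proof -
  note B = psd_invertibleD[OF assms(1)]
  have "s \<noteq> 0" using ys by auto
  then have "s \<bullet> B s \<noteq> 0" using psd_invertible_pos[OF assms(1)] by (metis less_irrefl)
  note upd = psd_invertibleI[OF bounded_linear_lbfgs_upd[OF B(1)] sym_op_lbfgs_upd[OF B(2)]
      psd_op_lbfgs_upd[OF bounded_linear.linear[OF B(1)] B(2,3) less_imp_le[OF ys]]
      bounded_linear_lbfgs_inv_upd[OF B(4)]
      lbfgs_upd_inv_upd[OF bounded_linear.linear[OF B(1)] B(5)]
      lbfgs_inv_upd_upd[OF bounded_linear.linear[OF B(4)] B(6)]]
  show "psd_invertible (lbfgs_upd B s y)" "inv (lbfgs_upd B s y) = lbfgs_inv_upd (inv B) s y"
    using upd ys \<open>s \<bullet> B s \<noteq> 0\<close> by auto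
qed

lemma curvature_pos:
  assumes "0 \<le> cs" and "cs * (norm s)^2 < y \<bullet> s"
  shows "0 < y \<bullet> s"
proof -
  have "0 \<le> cs * (norm s)^2" using assms(1) by simp
  then show ?thesis using assms(2) by linarith
qed

lemma curvature_ratio_bounds:
  fixes s y :: "'a::real_inner"
  assumes cs: "cs > 0" and curv: "cs * (norm s)^2 < y \<bullet> s" and lip: "norm y \<le> L * norm s"
  shows "(norm y)^2 / (y \<bullet> s) \<le> L^2 / cs" "norm y * norm s / (y \<bullet> s) \<le> L / cs"
    "(norm s)^2 / (y \<bullet> s) \<le> 1 / cs"
proof -
  have "s \<noteq> 0" using curv by auto
  then have pos: "0 < cs * (norm s)^2" using cs by simp
  have "0 \<le> L * norm s" using lip norm_ge_zero order_trans by blast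
  then have "0 \<le> L" using \<open>s \<noteq> 0\<close> by (simp add: zero_le_mult_iff)
  have "(norm y)^2 / (y \<bullet> s) \<le> (L * norm s)^2 / (cs * (norm s)^2)"
    using lip pos curv by (intro frac_le power_mono) auto
  then show "(norm y)^2 / (y \<bullet> s) \<le> L^2 / cs" using \<open>s \<noteq> 0\<close> by (simp add: power_mult_distrib)
  have "norm y * norm s / (y \<bullet> s) \<le> (L * norm s * norm s) / (cs * (norm s)^2)"
    using lip pos curv \<open>0 \<le> L\<close> by (intro frac_le mult_right_mono) auto
  then show "norm y * norm s / (y \<bullet> s) \<le> L / cs" using \<open>s \<noteq> 0\<close> by (simp add: power2_eq_square)
  have "(norm s)^2 / (y \<bullet> s) \<le> (norm s)^2 / (cs * (norm s)^2)"
    using pos curv by (intro frac_le) auto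
  then show "(norm s)^2 / (y \<bullet> s) \<le> 1 / cs" using \<open>s \<noteq> 0\<close> by simp
qed

lemma lbfgs_upd_norm_bound:
  assumes B: "psd_invertible B" and cs: "cs > 0"
    and curv: "cs * (norm s)^2 < y \<bullet> s" and lip: "norm y \<le> L * norm s"
  shows "onorm (lbfgs_upd B s y) + onorm (inv (lbfgs_upd B s y)) + 2 * ((L^2 + 1) / cs)
    \<le> (2 + (1 + L / cs)^2) * (onorm B + onorm (inv B) + 2 * ((L^2 + 1) / cs))"
proof -
  define A where "A = 2 + (1 + L / cs)^2"
  define D where "D = (L^2 + 1) / cs"
  have ys: "0 < y \<bullet> s" using curvature_pos[OF less_imp_le[OF cs] curv] .
  have ratio: "(norm y)^2 / (y \<bullet> s) \<le> L^2 / cs" "norm y * norm s / (y \<bullet> s) \<le> L / cs"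
    "(norm s)^2 / (y \<bullet> s) \<le> 1 / cs"
    using curvature_ratio_bounds[OF cs curv lip] by auto
  note B' = psd_invertibleD[OF B]
  have nB: "0 \<le> onorm B" and nH: "0 \<le> onorm (inv B)" using onorm_pos_le B'(1,4) by auto
  have "onorm (lbfgs_upd B s y) \<le> 2 * onorm B + (norm y)^2 / (y \<bullet> s)"
    using lbfgs_upd_norm_le[OF B'(1-3) ys] nB ys by (intro onorm_bound) auto
  then have upd: "onorm (lbfgs_upd B s y) \<le> 2 * onorm B + L^2 / cs" using ratio(1) by linarith
  have "(1 + norm y * norm s / (y \<bullet> s))^2 \<le> (1 + L / cs)^2"
    using ratio(2) ys by (intro power_mono) auto
  then have "onorm (inv B) * (1 + norm y * norm s / (y \<bullet> s))^2 \<le> onorm (inv B) * (1 + L / cs)^2"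
    using nH by (rule mult_left_mono)
  moreover have "onorm (lbfgs_inv_upd (inv B) s y)
      \<le> onorm (inv B) * (1 + norm y * norm s / (y \<bullet> s))^2 + (norm s)^2 / (y \<bullet> s)"
    using lbfgs_inv_upd_norm_le[OF B'(4) ys] nH ys by (intro onorm_bound) auto
  ultimately have inv_upd: "onorm (inv (lbfgs_upd B s y)) \<le> onorm (inv B) * (1 + L / cs)^2 + 1 / cs"
    unfolding psd_invertible_lbfgs_upd(2)[OF B ys] using ratio(3) by linarith
  have "2 \<le> A" "(1 + L / cs)^2 \<le> A" "0 \<le> D" unfolding A_def D_def using cs by auto
  then have "2 * onorm B \<le> A * onorm B" "onorm (inv B) * (1 + L / cs)^2 \<le> onorm (inv B) * A"
    "2 * D \<le> A * D" using nB nH by (auto intro: mult_right_mono mult_left_mono)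
  moreover have "L^2 / cs + 1 / cs = D" unfolding D_def by (simp add: add_divide_distrib)
  moreover have "A * (onorm B + onorm (inv B) + 2 * D)
      = A * onorm B + onorm (inv B) * A + 2 * (A * D)"
    by (simp add: algebra_simps)
  ultimately show ?thesis
    using upd inv_upd \<open>0 \<le> D\<close> unfolding A_def[symmetric] D_def[symmetric] by linarith
qed

lemma psd_invertible_lbfgs_op:
  assumes "finite I" and "psd_invertible B" and "\<forall>j\<in>I. 0 < y j \<bullet> s j"
  shows "psd_invertible (lbfgs_op B s y I)"
proof -
  have "psd_invertible (fold (\<lambda>j B. lbfgs_upd B (s j) (y j)) js B)"
    if "psd_invertible B" "\<forall>j\<in>set js. 0 < y j \<bullet> s j" for js B
    using that by (induction js arbitrary: B) (auto simp: psd_invertible_lbfgs_upd)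
  then show ?thesis using assms unfolding lbfgs_op_def by simp
qed

lemma lbfgs_op_norm_bound:
  fixes s y :: "nat \<Rightarrow> 'a::real_inner"
  assumes "finite I" and "psd_invertible B" and cs: "cs > 0"
    and curv: "\<forall>j\<in>I. cs * (norm (s j))^2 < y j \<bullet> s j"
    and lip: "\<forall>j\<in>I. norm (y j) \<le> L * norm (s j)"
  shows "onorm (lbfgs_op B s y I) + onorm (inv (lbfgs_op B s y I)) + 2 * ((L^2 + 1) / cs)
    \<le> (2 + (1 + L / cs)^2) ^ card I * (onorm B + onorm (inv B) + 2 * ((L^2 + 1) / cs))"
proof -
  define A where "A = 2 + (1 + L / cs)^2"
  define N :: "('a \<Rightarrow> 'a) \<Rightarrow> real"
    where "N = (\<lambda>B. onorm B + onorm (inv B) + 2 * ((L^2 + 1) / cs))"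
  have "N (fold (\<lambda>j B. lbfgs_upd B (s j) (y j)) js B) \<le> A ^ length js * N B"
    if "psd_invertible B"
      and "\<forall>j\<in>set js. cs * (norm (s j))^2 < y j \<bullet> s j \<and> norm (y j) \<le> L * norm (s j)"
    for js B
    using that
  proof (induction js arbitrary: B)
    case (Cons j js)
    have ys: "0 < y j \<bullet> s j" using Cons.prems(2) curvature_pos[OF less_imp_le[OF cs]] by auto
    have "N (fold (\<lambda>j B. lbfgs_upd B (s j) (y j)) js (lbfgs_upd B (s j) (y j)))
        \<le> A ^ length js * N (lbfgs_upd B (s j) (y j))"
      using Cons psd_invertible_lbfgs_upd(1)[OF Cons.prems(1) ys] by simp
    also have "\<dots> \<le> A ^ length js * (A * N B)"
      using lbfgs_upd_norm_bound[OF Cons.prems(1) cs] Cons.prems(2) unfolding N_def A_def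
      by (intro mult_left_mono) auto
    finally show ?case by (simp add: mult.assoc mult.left_commute)
  qed simp
  from this[where js = "sorted_list_of_set I" and B = B] show ?thesis
    using assms unfolding lbfgs_op_def A_def N_def by simp
qed

section \<open>Coercive operators\<close>

lemma coercive_op_contraction:
  fixes A :: "'a::real_inner \<Rightarrow> 'a"
  assumes bl: "bounded_linear A" and m: "m > 0" and coercive: "\<And>v. m * (norm v)^2 \<le> v \<bullet> A v"
  obtains \<omega> c where "\<omega> \<noteq> 0" "0 \<le> c" "c < 1" "\<And>e. norm (e - \<omega> *\<^sub>R A e) \<le> c * norm e"
proof -
  define N where "N = onorm A + m"
  have N: "N > 0" "m \<le> N" using onorm_pos_le[OF bl] m N_def by auto
  define \<omega> where "\<omega> = m / N^2"
  define c where "c = sqrt (1 - m^2 / N^2)"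
  have "m^2 \<le> N^2" using N m by (intro power_mono) auto
  then have mN: "m^2 / N^2 \<le> 1" using N by simp
  have bound: "norm (e - \<omega> *\<^sub>R A e) \<le> c * norm e" for e
  proof -
    have Ae: "norm (A e) \<le> N * norm e"
      using onorm[OF bl, of e] N_def m by (simp add: algebra_simps add_increasing)
    have "(norm (e - \<omega> *\<^sub>R A e))^2 = (norm e)^2 - 2 * \<omega> * (e \<bullet> A e) + \<omega>^2 * (norm (A e))^2"
      by (simp add: power2_norm_eq_inner inner_diff_left inner_diff_right
          inner_commute algebra_simps power2_eq_square[of \<omega>])
    also have "\<dots> \<le> (norm e)^2 - 2 * \<omega> * (m * (norm e)^2) + \<omega>^2 * (N * norm e)^2"
    proof -
      have "2 * \<omega> * (m * (norm e)^2) \<le> 2 * \<omega> * (e \<bullet> A e)"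
        using coercive[of e] \<omega>_def m N by (intro mult_left_mono) auto
      moreover have "\<omega>^2 * (norm (A e))^2 \<le> \<omega>^2 * (N * norm e)^2"
        by (intro mult_left_mono power_mono Ae) auto
      ultimately show ?thesis by linarith
    qed
    also have "\<dots> = (1 - m^2 / N^2) * (norm e)^2"
      using N unfolding \<omega>_def by (simp add: field_simps power2_eq_square)
    also have "\<dots> = (c * norm e)^2" unfolding c_def using mN by (simp add: power_mult_distrib)
    finally have "(norm (e - \<omega> *\<^sub>R A e))^2 \<le> (c * norm e)^2" .
    moreover have "0 \<le> c * norm e" unfolding c_def using mN by simp
    ultimately show ?thesis by (rule power2_le_imp_le)
  qed
  have "0 \<le> c" "c < 1" unfolding c_def using m N mN by (simp_all add: real_sqrt_lt_1_iff)
  moreover have "\<omega> \<noteq> 0" using m N \<omega>_def by simp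
  ultimately show thesis using that bound by blast
qed

text \<open>Surjectivity is the Lax-Milgram argument: \<open>A v = w\<close> is the fixed point of the
  contraction \<open>v \<mapsto> v - \<omega> (A v - w)\<close>.\<close>
lemma coercive_op_invertible:
  fixes A :: "'a::{real_inner,complete_space} \<Rightarrow> 'a"
  assumes bl: "bounded_linear A" and m: "m > 0" and coercive: "\<And>v. m * (norm v)^2 \<le> v \<bullet> A v"
  shows "bij A" "bounded_linear (inv A)" "onorm (inv A) \<le> 1 / m"
proof -
  have lin: "linear A" using bl bounded_linear.linear by blast
  obtain \<omega> c where \<omega>: "\<omega> \<noteq> 0" and c: "0 \<le> c" "c < 1"
    and contr: "\<And>e. norm (e - \<omega> *\<^sub>R A e) \<le> c * norm e"
    using coercive_op_contraction[OF bl m coercive] by blast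
  have "w \<in> range A" for w
  proof -
    have "\<forall>u v. dist (u - \<omega> *\<^sub>R (A u - w)) (v - \<omega> *\<^sub>R (A v - w)) \<le> c * dist u v"
    proof (intro allI)
      fix u v
      have "(u - \<omega> *\<^sub>R (A u - w)) - (v - \<omega> *\<^sub>R (A v - w)) = (u - v) - \<omega> *\<^sub>R A (u - v)"
        by (simp add: linear_diff[OF lin] algebra_simps)
      then show "dist (u - \<omega> *\<^sub>R (A u - w)) (v - \<omega> *\<^sub>R (A v - w)) \<le> c * dist u v"
        using contr[of "u - v"] by (simp only: dist_norm)
    qed
    from banach_fix_type[OF c this] obtain v where "v - \<omega> *\<^sub>R (A v - w) = v" by blast
    then show ?thesis using \<omega> by auto
  qed
  moreover have "inj A"
  proof (rule injI)
    fix u v assume "A u = A v"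
    then have "m * (norm (u - v))^2 \<le> 0"
      using coercive[of "u - v"] by (simp add: linear_diff[OF lin])
    then show "u = v" using m by (simp add: mult_le_0_iff)
  qed
  ultimately show bij: "bij A" by (simp add: bij_def surj_def image_iff)
  have bound: "norm (inv A w) \<le> (1 / m) * norm w" for w
  proof -
    have "m * (norm (inv A w))^2 \<le> norm (inv A w) * norm w"
      using coercive[of "inv A w"] norm_cauchy_schwarz[of "inv A w" w] bij
      by (simp add: bij_is_surj surj_f_inv_f)
    then have "m * norm (inv A w) \<le> norm w"
      by (cases "inv A w = 0") (auto simp: power2_eq_square mult.assoc)
    then show ?thesis using m by (simp add: field_simps)
  qed
  show "bounded_linear (inv A)" by (rule bounded_linear_inv[OF bl bij bound])
  show "onorm (inv A) \<le> 1 / m" using onorm_bound[of "1 / m" "inv A"] bound m by simp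
qed

section \<open>Averaged derivatives\<close>

lemma bounded_linear_pointwise_limit:
  fixes X :: "nat \<Rightarrow> 'a::real_normed_vector \<Rightarrow>\<^sub>L 'b::real_normed_vector"
  assumes T: "\<And>v. (\<lambda>n. X n v) \<longlonglongrightarrow> T v" and b: "\<And>n. norm (X n) \<le> b"
  shows "bounded_linear T"
proof (rule bounded_linear_intro[where K = b])
  show "T (u + v) = T u + T v" for u v
    using LIMSEQ_unique[OF T[of "u + v"]] tendsto_add[OF T T] by (simp add: blinfun.add_right)
  show "T (r *\<^sub>R v) = r *\<^sub>R T v" for r v
    using LIMSEQ_unique[OF T[of "r *\<^sub>R v"]] tendsto_scaleR[OF tendsto_const T]
    by (simp add: blinfun.scaleR_right)
  show "norm (T v) \<le> norm v * b" for v
  proof (rule tendsto_le[OF _ tendsto_const tendsto_norm[OF T]])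
    show "\<forall>\<^sub>F n in sequentially. norm (X n v) \<le> norm v * b"
      using mult_left_mono[OF b norm_ge_zero[of v]]
      by (intro always_eventually allI order_trans[OF norm_blinfun]) (simp add: mult.commute)
  qed simp
qed

text \<open>Completeness of \<open>'a \<Rightarrow>\<^sub>L 'b\<close> is otherwise available only for \<open>'b::banach\<close>, and the sort
  \<open>{real_inner, complete_space}\<close> of the Hilbert space is not a subsort of \<open>banach\<close>.\<close>
lemma Cauchy_blinfun_convergent:
  fixes X :: "nat \<Rightarrow> 'a::real_normed_vector \<Rightarrow>\<^sub>L 'b::{real_normed_vector,complete_space}"
  assumes "Cauchy X"
  shows "convergent X"
proof -
  have "Cauchy (\<lambda>n. X n v)" for v
    using bounded_linear.Cauchy[OF blinfun.bounded_linear_left assms] .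
  then obtain T where T: "\<And>v. (\<lambda>n. X n v) \<longlonglongrightarrow> T v"
    unfolding Cauchy_convergent_iff convergent_def by metis
  obtain b where "\<And>n. norm (X n) \<le> b"
    using Cauchy_Bseq[OF assms] unfolding Bseq_def by (metis less_imp_le)
  with T have lin: "bounded_linear T" by (rule bounded_linear_pointwise_limit)
  have "X \<longlonglongrightarrow> Blinfun T"
  proof (rule LIMSEQ_I)
    fix e :: real assume "0 < e"
    then obtain N where N: "\<And>m n. N \<le> m \<Longrightarrow> N \<le> n \<Longrightarrow> norm (X m - X n) < e / 2"
      using CauchyD[OF assms, of "e / 2"] by auto
    have close: "norm (X n - Blinfun T) \<le> e / 2" if "N \<le> n" for n
    proof (rule norm_blinfun_bound)
      fix v
      have "\<forall>\<^sub>F m in sequentially. norm (X n v - X m v) \<le> e / 2 * norm v"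
        using eventually_ge_at_top[of N]
      proof eventually_elim
        case (elim m)
        have "norm (X n v - X m v) \<le> norm (X n - X m) * norm v"
          using norm_blinfun[of "X n - X m" v] by (simp add: blinfun.diff_left)
        also have "\<dots> \<le> e / 2 * norm v"
          using N[OF that elim] by (intro mult_right_mono) auto
        finally show ?case .
      qed
      moreover have "(\<lambda>m. norm (X n v - X m v)) \<longlonglongrightarrow> norm (X n v - T v)"
        by (intro tendsto_intros T)
      ultimately have "norm (X n v - T v) \<le> e / 2 * norm v"
        by (intro tendsto_upperbound) auto
      then show "norm ((X n - Blinfun T) v) \<le> e / 2 * norm v"
        by (simp add: blinfun.diff_left bounded_linear_Blinfun_apply[OF lin])
    qed (use \<open>0 < e\<close> in simp)
    show "\<exists>N. \<forall>n\<ge>N. norm (X n - Blinfun T) < e"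
    proof (intro exI allI impI)
      fix n assume "N \<le> n"
      then show "norm (X n - Blinfun T) < e" using close \<open>0 < e\<close> by fastforce
    qed
  qed
  then show ?thesis by (rule convergentI)
qed

instance blinfun :: (real_normed_vector, "{real_normed_vector,complete_space}") banach
  by standard (rule Cauchy_blinfun_convergent)

lemma integral_derivative_apply:
  fixes f :: "'a::real_normed_vector \<Rightarrow> 'b::{real_inner,complete_space}"
    and f' :: "'a \<Rightarrow> ('a \<Rightarrow>\<^sub>L 'b)"
  assumes der: "\<And>z. (f has_derivative blinfun_apply (f' z)) (at z)" and "continuous_on UNIV f'"
  shows "integral {0..1} (\<lambda>t. f' (x + t *\<^sub>R s)) s = f (x + s) - f x"
proof -
  define F where "F t = f' (x + t *\<^sub>R s)" for t
  define I where "I = integral {0..1} F s"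
  define D where "D = f (x + s) - f x"
  have "continuous_on {0..1} F"
    unfolding F_def using \<open>continuous_on UNIV f'\<close>
    by (auto intro!: continuous_on_compose2[of UNIV f'] continuous_intros)
  then have int: "F integrable_on {0..1}" by (rule integrable_continuous_real)
  \<comment> \<open>\<open>'b\<close> need not be of class \<open>banach\<close>, so the fundamental theorem of calculus
    is applied to the scalar functions \<open>w \<bullet> f\<close>.\<close>
  have "w \<bullet> I = w \<bullet> D" for w
  proof -
    have "bounded_linear (\<lambda>A. w \<bullet> blinfun_apply A s)"
      by (intro bounded_linear_compose[OF bounded_linear_inner_right] blinfun.bounded_linear_left)
    from has_integral_linear[OF integrable_integral[OF int] this]
    have "((\<lambda>t. w \<bullet> F t s) has_integral w \<bullet> I) {0..1}" unfolding I_def by (simp add: o_def)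
    moreover have "((\<lambda>t. w \<bullet> f (x + t *\<^sub>R s)) has_vector_derivative w \<bullet> F t s)
        (at t within {0..1})" for t
    proof -
      have "((\<lambda>t. x + t *\<^sub>R s) has_derivative (\<lambda>h. h *\<^sub>R s)) (at t within {0..1})"
        by (auto intro!: derivative_eq_intros)
      from has_derivative_inner_right[OF has_derivative_compose[OF this der]] show ?thesis
        unfolding has_vector_derivative_def F_def by (simp add: blinfun.scaleR_right mult.commute)
    qed
    then have "((\<lambda>t. w \<bullet> F t s) has_integral w \<bullet> f (x + 1 *\<^sub>R s) - w \<bullet> f (x + 0 *\<^sub>R s)) {0..1}"
      by (intro fundamental_theorem_of_calculus) auto
    ultimately show ?thesis unfolding D_def by (simp add: has_integral_unique inner_diff_right)
  qed
  then have "(I - D) \<bullet> (I - D) = 0" by (simp add: inner_diff_right)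
  then show ?thesis unfolding I_def F_def D_def by simp
qed

section \<open>The safeguarded scaling\<close>

lemma proj_box_bounds:
  assumes "lo \<le> hi"
  shows "lo \<le> proj_box lo hi t" "proj_box lo hi t \<le> hi" "proj_box lo hi t \<le> max t lo"
  using assms unfolding proj_box_def by auto

lemma safeguarded_tau_bounds:
  fixes z s :: "'a::real_inner"
  assumes C0: "ereal c0 \<le> C0"
    and choice: "let z = z; \<rho> = z \<bullet> s;
             g = g;
             wl = ereal (min c0 (c1 * g powr c2));
             wu = max C0 (ereal (inverse (c1 * g powr c2)));
             ts = proj_box wl wu (ereal (\<rho> / (norm s)\<^sup>2));
             tg = proj_box wl wu (ereal (norm z / norm s));
             tz = proj_box wl wu (ereal ((norm z)\<^sup>2 / \<rho>))
         in if \<rho> > 0 \<and> \<not> vg then ts \<le> ereal \<tau> \<and> ereal \<tau> \<le> tz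
            else ts \<le> ereal \<tau> \<and> ereal \<tau> \<le> tg"
  shows "min c0 (c1 * g powr c2) \<le> \<tau>" "ereal \<tau> \<le> max C0 (ereal (inverse (c1 * g powr c2)))"
    "z \<bullet> s > 0 \<and> \<not> vg \<Longrightarrow> \<tau> \<le> max ((norm z)^2 / (z \<bullet> s)) c0"
    "\<not> (z \<bullet> s > 0 \<and> \<not> vg) \<Longrightarrow> \<tau> \<le> max (norm z / norm s) c0"
proof -
  define lo where "lo = min c0 (c1 * g powr c2)"
  define hi where "hi = max C0 (ereal (inverse (c1 * g powr c2)))"
  have "ereal lo \<le> ereal c0" unfolding lo_def by simp
  then have "ereal lo \<le> hi" using C0 unfolding hi_def by (meson max.coboundedI1 order_trans)
  note box = proj_box_bounds[OF this]
  have between: "lo \<le> \<tau> \<and> ereal \<tau> \<le> hi \<and> \<tau> \<le> max t c0"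
    if "proj_box (ereal lo) hi t' \<le> ereal \<tau>" "ereal \<tau> \<le> proj_box (ereal lo) hi (ereal t)" for t t'
  proof -
    have "ereal \<tau> \<le> max (ereal t) (ereal lo)" using that(2) box(3) order_trans by blast
    then have "\<tau> \<le> max t lo" by (simp add: max_def split: if_splits)
    moreover have "lo \<le> c0" unfolding lo_def by simp
    ultimately show ?thesis
      using that box(1,2) order_trans by (metis ereal_less_eq(3) max.mono order_refl)
  qed
  have "if z \<bullet> s > 0 \<and> \<not> vg
        then proj_box (ereal lo) hi (ereal ((z \<bullet> s) / (norm s)\<^sup>2)) \<le> ereal \<tau>
          \<and> ereal \<tau> \<le> proj_box (ereal lo) hi (ereal ((norm z)\<^sup>2 / (z \<bullet> s)))
        else proj_box (ereal lo) hi (ereal ((z \<bullet> s) / (norm s)\<^sup>2)) \<le> ereal \<tau>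
          \<and> ereal \<tau> \<le> proj_box (ereal lo) hi (ereal (norm z / norm s))"
    using choice unfolding Let_def lo_def hi_def .
  then show "min c0 (c1 * g powr c2) \<le> \<tau>" "ereal \<tau> \<le> max C0 (ereal (inverse (c1 * g powr c2)))"
    "z \<bullet> s > 0 \<and> \<not> vg \<Longrightarrow> \<tau> \<le> max ((norm z)^2 / (z \<bullet> s)) c0"
    "\<not> (z \<bullet> s > 0 \<and> \<not> vg) \<Longrightarrow> \<tau> \<le> max (norm z / norm s) c0"
    using between unfolding lo_def hi_def by (auto split: if_splits)
qed

lemma scaled_id_plus_props:
  fixes S :: "'a::real_inner \<Rightarrow> 'a"
  assumes bl: "bounded_linear S" and "sym_op S" and "psd_op S" and "0 \<le> \<tau>"
  shows "bounded_linear (\<lambda>v. \<tau> *\<^sub>R v + S v)" "sym_op (\<lambda>v. \<tau> *\<^sub>R v + S v)"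
    "psd_op (\<lambda>v. \<tau> *\<^sub>R v + S v)" "\<And>v. \<tau> * (norm v)^2 \<le> v \<bullet> (\<tau> *\<^sub>R v + S v)"
    "onorm (\<lambda>v. \<tau> *\<^sub>R v + S v) \<le> \<tau> + onorm S"
proof -
  show "bounded_linear (\<lambda>v. \<tau> *\<^sub>R v + S v)" by (intro bounded_linear_intros bl)
  show "sym_op (\<lambda>v. \<tau> *\<^sub>R v + S v)" using \<open>sym_op S\<close> unfolding sym_op_def
    by (simp add: inner_add_left inner_add_right inner_commute)
  show coercive: "\<tau> * (norm v)^2 \<le> v \<bullet> (\<tau> *\<^sub>R v + S v)" for v
    using \<open>psd_op S\<close> unfolding psd_op_def by (simp add: inner_add_right power2_norm_eq_inner)
  show "psd_op (\<lambda>v. \<tau> *\<^sub>R v + S v)" unfolding psd_op_def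
    using coercive \<open>0 \<le> \<tau>\<close> by (metis mult_nonneg_nonneg zero_le_power2 order_trans)
  show "onorm (\<lambda>v. \<tau> *\<^sub>R v + S v) \<le> \<tau> + onorm S"
  proof (rule onorm_bound)
    show "0 \<le> \<tau> + onorm S" using \<open>0 \<le> \<tau>\<close> onorm_pos_le[OF bl] by simp
    show "norm (\<tau> *\<^sub>R v + S v) \<le> (\<tau> + onorm S) * norm v" for v
      using norm_triangle_ineq[of "\<tau> *\<^sub>R v" "S v"] \<open>0 \<le> \<tau>\<close> onorm[OF bl, of v]
      by (simp add: algebra_simps)
  qed
qed

lemma psd_invertible_scaled_id_plus:
  fixes S :: "'a::{real_inner,complete_space} \<Rightarrow> 'a"
  assumes "bounded_linear S" and "sym_op S" and "psd_op S" and "0 < \<tau>"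
  shows "psd_invertible (\<lambda>v. \<tau> *\<^sub>R v + S v)" "onorm (inv (\<lambda>v. \<tau> *\<^sub>R v + S v)) \<le> 1 / \<tau>"
  using coercive_op_invertible[OF _ \<open>0 < \<tau>\<close>]
    scaled_id_plus_props[OF assms(1-3) less_imp_le[OF \<open>0 < \<tau>\<close>]]
  unfolding psd_invertible_def by auto

section \<open>The SLBFGS iteration\<close>

lemma enat_Suc_lessD: "enat (Suc k) < K \<Longrightarrow> enat k < K"
  by (meson Suc_ile_eq less_imp_le)

lemma finite_stored_pairs: "finite (stored_pairs ell cs s y k)"
  by (rule finite_subset[of _ "{..<k}"]) (auto simp: stored_pairs_def)

lemma card_stored_pairs_le: "card (stored_pairs ell cs s y k) \<le> ell"
proof -
  have "card (stored_pairs ell cs s y k) \<le> card {k - ell..<k}"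
    by (intro card_mono) (auto simp: stored_pairs_def)
  then show ?thesis by simp
qed

lemma stored_pairsD:
  "j \<in> stored_pairs ell cs s y k \<Longrightarrow> j < k \<and> cs * (norm (s j))^2 < y j \<bullet> s j"
  unfolding stored_pairs_def by auto

lemma le_mult_max_one:
  fixes u a b p :: real
  assumes "u \<le> a + b * p" and "0 \<le> a" and "0 \<le> b"
  shows "u \<le> (a + b) * max 1 p"
proof -
  have "a \<le> a * max 1 p" "b * p \<le> b * max 1 p"
    using assms(2,3) by (simp_all add: mult_le_cancel_left1 mult_left_mono)
  then show ?thesis using assms(1) by (simp add: distrib_right)
qed

text \<open>The hypotheses of the theorem that the bound depends on; the line search enters only
  through the sufficient decrease condition it guarantees.\<close>
locale slbfgs =
  fixes J :: "'a::{real_inner,complete_space} \<Rightarrow> real"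
    and grad :: "'a \<Rightarrow> 'a"
    and x0 :: 'a and eps :: real and ell :: nat
    and c0 cs c1 c2 :: real and C0 :: ereal and L :: real
    and sigma :: real and variant_g :: bool
    and K :: enat
    and x d s y :: "nat \<Rightarrow> 'a"
    and alpha tau :: "nat \<Rightarrow> real"
    and S B :: "nat \<Rightarrow> 'a \<Rightarrow> 'a"
  assumes eps: "eps \<ge> 0" and c0: "c0 \<ge> 0" and C0: "C0 \<ge> ereal c0"
    and cs: "cs > 0" and c1: "c1 > 0" and tau0: "tau 0 > 0"
    and L: "L > 0" and sigma: "sigma > 0"
    and Lip: "\<And>u v. J u \<le> J x0 \<Longrightarrow> J v \<le> J x0 \<Longrightarrow> norm (grad u - grad v) \<le> L * norm (u - v)"
    and K_pos: "0 < K"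
    and x_0: "x 0 = x0"
    and S_lin: "\<And>k. enat k < K \<Longrightarrow> bounded_linear (S k) \<and> sym_op (S k) \<and> psd_op (S k)"
    and S_bdd: "\<exists>M. \<forall>k. enat k < K \<longrightarrow> onorm (S k) \<le> M"
    and B_def: "\<And>k. enat k < K \<Longrightarrow>
        B k = lbfgs_op (\<lambda>v. tau k *\<^sub>R v + S k v) s y (stored_pairs ell cs s y k)"
    and d_def: "\<And>k. enat k < K \<Longrightarrow> d k = - inv (B k) (grad (x k))"
    and alpha_pos: "\<And>k. enat k < K \<Longrightarrow> alpha k > 0"
    and sufficient_decrease: "\<And>k. enat k < K \<Longrightarrow>
        J (x k + alpha k *\<^sub>R d k) \<le> J (x k) + alpha k * sigma * (grad (x k) \<bullet> d k)"
    and s_def: "\<And>k. enat k < K \<Longrightarrow> s k = alpha k *\<^sub>R d k"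
    and x_Suc: "\<And>k. enat k < K \<Longrightarrow> x (Suc k) = x k + s k"
    and y_def: "\<And>k. enat k < K \<Longrightarrow> y k = grad (x (Suc k)) - grad (x k)"
    and stop: "\<And>k. enat k < K \<Longrightarrow> (norm (grad (x (Suc k))) \<le> eps \<longleftrightarrow> enat (Suc k) = K)"
    and tau_upd: "\<And>k. enat (Suc k) < K \<Longrightarrow>
        (let z = y k - S (Suc k) (s k); \<rho> = z \<bullet> s k;
             g = norm (grad (x (Suc k)));
             wl = ereal (min c0 (c1 * g powr c2));
             wu = max C0 (ereal (inverse (c1 * g powr c2)));
             ts = proj_box wl wu (ereal (\<rho> / (norm (s k))\<^sup>2));
             tg = proj_box wl wu (ereal (norm z / norm (s k)));
             tz = proj_box wl wu (ereal ((norm z)\<^sup>2 / \<rho>))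
         in if \<rho> > 0 \<and> \<not> variant_g then ts \<le> ereal (tau (Suc k)) \<and> ereal (tau (Suc k)) \<le> tz
            else ts \<le> ereal (tau (Suc k)) \<and> ereal (tau (Suc k)) \<le> tg)"
    and c0_zero: "c0 = 0 \<Longrightarrow> \<exists>M. \<forall>k. enat k < K \<longrightarrow>
        bij (\<lambda>v. tau k *\<^sub>R v + S k v) \<and> bounded_linear (inv (\<lambda>v. tau k *\<^sub>R v + S k v)) \<and>
        onorm (inv (\<lambda>v. tau k *\<^sub>R v + S k v)) \<le> M"
    and C0_inf: "C0 = \<infinity> \<Longrightarrow> variant_g \<or>
        (\<exists>H :: 'a \<Rightarrow> ('a \<Rightarrow>\<^sub>L 'a).
          (\<forall>z. (grad has_derivative blinfun_apply (H z)) (at z)) \<and> continuous_on UNIV H \<and>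
          (\<exists>M. \<forall>k. enat (Suc k) < K \<longrightarrow>
             (let G = (\<lambda>v. blinfun_apply (integral {0..1} (\<lambda>t. H (x k + t *\<^sub>R s k))) v - S (Suc k) v)
              in sym_op G \<and> psd_op G \<and> onorm G \<le> M)))"
begin

abbreviation B_init :: "nat \<Rightarrow> 'a \<Rightarrow> 'a" where
  "B_init k \<equiv> \<lambda>v. tau k *\<^sub>R v + S k v"

abbreviation weight :: "nat \<Rightarrow> real" where
  "weight k \<equiv> max 1 (norm (grad (x k)) powr - c2)"

lemmas tau_safeguard = safeguarded_tau_bounds[OF C0 tau_upd]

lemma grad_Suc_pos:
  assumes "enat (Suc k) < K"
  shows "0 < norm (grad (x (Suc k)))"
proof -
  have "\<not> norm (grad (x (Suc k))) \<le> eps" using stop[OF enat_Suc_lessD[OF assms]] assms by simp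
  then show ?thesis using eps by linarith
qed

lemma tau_nonneg:
  assumes "enat k < K"
  shows "0 \<le> tau k"
proof (cases k)
  case (Suc j)
  have "0 \<le> min c0 (c1 * norm (grad (x (Suc j))) powr c2)" using c0 c1 by simp
  also have "\<dots> \<le> tau (Suc j)" using tau_safeguard(1) assms Suc by simp
  finally show ?thesis using Suc by simp
qed (use tau0 in simp)

lemma tau_pos:
  assumes "enat k < K" and "0 < c0"
  shows "0 < tau k"
proof (cases k)
  case (Suc j)
  have "0 < min c0 (c1 * norm (grad (x (Suc j))) powr c2)" using grad_Suc_pos assms Suc c1 by simp
  also have "\<dots> \<le> tau (Suc j)" using tau_safeguard(1) assms Suc by simp
  finally show ?thesis using Suc by simp
qed (use tau0 in simp)

lemma psd_invertible_B_init:
  assumes k: "enat k < K"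
  shows "psd_invertible (B_init k)"
proof (cases "c0 = 0")
  case True
  then obtain M where "\<forall>k. enat k < K \<longrightarrow> bij (B_init k) \<and> bounded_linear (inv (B_init k))
      \<and> onorm (inv (B_init k)) \<le> M"
    using c0_zero by blast
  moreover have "bounded_linear (B_init k)" "sym_op (B_init k)" "psd_op (B_init k)"
    using scaled_id_plus_props(1-3)[of "S k" "tau k"] S_lin[OF k] tau_nonneg[OF k] by auto
  ultimately show ?thesis using k unfolding psd_invertible_def by simp
next
  case False
  then have "0 < tau k" using tau_pos[OF k] c0 by simp
  then show ?thesis using psd_invertible_scaled_id_plus(1)[of "S k" "tau k"] S_lin[OF k] by blast
qed

lemma psd_invertible_B:
  assumes k: "enat k < K"
  shows "psd_invertible (B k)"
  unfolding B_def[OF k]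
proof (rule psd_invertible_lbfgs_op[OF finite_stored_pairs psd_invertible_B_init[OF k]])
  show "\<forall>j\<in>stored_pairs ell cs s y k. 0 < y j \<bullet> s j"
    using stored_pairsD curvature_pos cs by (meson less_imp_le)
qed

lemma descent:
  assumes k: "enat k < K"
  shows "J (x (Suc k)) \<le> J (x k)"
proof -
  have "0 \<le> grad (x k) \<bullet> inv (B k) (grad (x k))"
    using psd_invertible_psd_inv[OF psd_invertible_B[OF k]] unfolding psd_op_def by blast
  then have "alpha k * sigma * (grad (x k) \<bullet> d k) \<le> 0"
    using alpha_pos[OF k] sigma d_def[OF k] by (simp add: mult_nonneg_nonpos)
  then show ?thesis using sufficient_decrease[OF k] x_Suc[OF k] s_def[OF k] by simp
qed

lemma in_level_set:
  assumes "enat k < K"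
  shows "J (x k) \<le> J x0" "J (x (Suc k)) \<le> J x0"
proof -
  have "J (x k) \<le> J x0 \<and> J (x (Suc k)) \<le> J x0" using assms
  proof (induction k)
    case 0
    have "enat 0 < K" using K_pos by (simp add: zero_enat_def)
    then show ?case using descent x_0 by fastforce
  next
    case (Suc k)
    then show ?case using descent enat_Suc_lessD by fastforce
  qed
  then show "J (x k) \<le> J x0" "J (x (Suc k)) \<le> J x0" by auto
qed

lemma y_le_L_s:
  assumes "enat j < K"
  shows "norm (y j) \<le> L * norm (s j)"
  using Lip[OF in_level_set[OF assms]] y_def[OF assms] x_Suc[OF assms]
  by (simp add: norm_minus_commute)

lemma S_norm_bound:
  obtains M where "0 \<le> M" "\<And>k. enat k < K \<Longrightarrow> onorm (S k) \<le> M"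
proof -
  obtain M where "\<And>k. enat k < K \<Longrightarrow> onorm (S k) \<le> M" using S_bdd by blast
  then show thesis using that[of "\<bar>M\<bar>"] by force
qed

lemma norm_z_div_norm_s_le:
  assumes k: "enat (Suc k) < K" and M: "onorm (S (Suc k)) \<le> M"
  shows "norm (y k - S (Suc k) (s k)) / norm (s k) \<le> L + M"
proof (cases "s k = 0")
  case True
  then show ?thesis using L M onorm_pos_le[of "S (Suc k)"] S_lin[OF k] by simp
next
  case False
  have "norm (y k - S (Suc k) (s k)) \<le> norm (y k) + norm (S (Suc k) (s k))"
    by (rule norm_triangle_ineq4)
  also have "\<dots> \<le> L * norm (s k) + M * norm (s k)"
    using y_le_L_s[OF enat_Suc_lessD[OF k]] onorm[of "S (Suc k)" "s k"] S_lin[OF k]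
      mult_right_mono[OF M norm_ge_zero[of "s k"]] by simp
  finally show ?thesis using False by (simp add: divide_le_eq algebra_simps)
qed

lemma norm_z_sq_div_rho_le:
  assumes k: "enat (Suc k) < K"
    and der: "\<forall>z. (grad has_derivative blinfun_apply (H z)) (at z)" and "continuous_on UNIV H"
    and avg: "let G = (\<lambda>v. blinfun_apply (integral {0..1} (\<lambda>t. H (x k + t *\<^sub>R s k))) v
        - S (Suc k) v) in sym_op G \<and> psd_op G \<and> onorm G \<le> M"
    and pos: "0 < (y k - S (Suc k) (s k)) \<bullet> s k"
  shows "(norm (y k - S (Suc k) (s k)))^2 / ((y k - S (Suc k) (s k)) \<bullet> s k) \<le> M"
proof -
  define G where "G v = integral {0..1} (\<lambda>t. H (x k + t *\<^sub>R s k)) v - S (Suc k) v" for v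
  have G: "sym_op G" "psd_op G" "onorm G \<le> M" using avg unfolding G_def Let_def by auto
  have "bounded_linear G"
    unfolding G_def using S_lin[OF k]
    by (intro bounded_linear_sub blinfun.bounded_linear_right) auto
  moreover have "G (s k) = y k - S (Suc k) (s k)"
    unfolding G_def integral_derivative_apply[OF der[rule_format] \<open>continuous_on UNIV H\<close>]
    using y_def x_Suc enat_Suc_lessD[OF k] by simp
  ultimately show ?thesis
    using psd_op_norm_sq_div_le[OF _ G(1,2), of "s k"] pos G(3) by (simp add: inner_commute)
qed

lemma tau_Suc_bounded_if_C0_infinite:
  assumes "C0 = \<infinity>"
  obtains T where "\<And>k. enat (Suc k) < K \<Longrightarrow> tau (Suc k) \<le> T"
proof -
  obtain M where M: "0 \<le> M" "\<And>k. enat k < K \<Longrightarrow> onorm (S k) \<le> M" using S_norm_bound by blast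
  define z where "z k = y k - S (Suc k) (s k)" for k
  have z_case: "tau (Suc k) \<le> L + M + c0"
    if k: "enat (Suc k) < K" and "\<not> (0 < z k \<bullet> s k \<and> \<not> variant_g)" for k
  proof -
    have "max (norm (z k) / norm (s k)) c0 \<le> L + M + c0"
      using norm_z_div_norm_s_le[OF k M(2)[OF k]] L M(1) c0 unfolding z_def
      by (intro max.boundedI) auto
    then show ?thesis using tau_safeguard(4)[OF k] that(2) unfolding z_def by fastforce
  qed
  consider variant_g | H MG where "\<forall>z. (grad has_derivative blinfun_apply (H z)) (at z)"
    "continuous_on UNIV H"
    "\<And>k. enat (Suc k) < K \<Longrightarrow>
       (let G = (\<lambda>v. blinfun_apply (integral {0..1} (\<lambda>t. H (x k + t *\<^sub>R s k))) v - S (Suc k) v)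
        in sym_op G \<and> psd_op G \<and> onorm G \<le> MG)"
    using C0_inf[OF assms] by blast
  then show thesis
  proof cases
    case 1
    then show thesis using that z_case by blast
  next
    case (2 H MG)
    have "tau (Suc k) \<le> max MG (L + M + c0)" if k: "enat (Suc k) < K" for k
    proof (cases "0 < z k \<bullet> s k \<and> \<not> variant_g")
      case True
      then have "(norm (z k))^2 / (z k \<bullet> s k) \<le> MG"
        using norm_z_sq_div_rho_le[OF k 2(1,2) 2(3)[OF k]] unfolding z_def by blast
      then have "max ((norm (z k))^2 / (z k \<bullet> s k)) c0 \<le> max MG (L + M + c0)"
        using L M(1) by (intro max.mono) auto
      then show ?thesis using tau_safeguard(3)[OF k] True unfolding z_def by (meson order_trans)
    next
      case False
      then show ?thesis using z_case[OF k] by simp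
    qed
    then show thesis using that by blast
  qed
qed

lemma tau_Suc_le:
  obtains T where
    "\<And>k. enat (Suc k) < K \<Longrightarrow> tau (Suc k) \<le> T + inverse c1 * norm (grad (x (Suc k))) powr - c2"
proof (cases "C0 = \<infinity>")
  case True
  obtain T where T: "\<And>k. enat (Suc k) < K \<Longrightarrow> tau (Suc k) \<le> T"
    using tau_Suc_bounded_if_C0_infinite[OF True] by blast
  show thesis
  proof (rule that)
    fix k assume "enat (Suc k) < K"
    moreover have "0 \<le> inverse c1 * norm (grad (x (Suc k))) powr - c2" using c1 by simp
    ultimately show "tau (Suc k) \<le> T + inverse c1 * norm (grad (x (Suc k))) powr - c2"
      using T by fastforce
  qed
next
  case False
  then obtain C where C: "C0 = ereal C" using C0 by (cases C0) auto
  show thesis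
  proof (rule that[of "\<bar>C\<bar>"])
    fix k assume k: "enat (Suc k) < K"
    have "0 \<le> inverse c1 * norm (grad (x (Suc k))) powr - c2" using c1 by simp
    moreover have "ereal (tau (Suc k))
        \<le> max (ereal C) (ereal (inverse c1 * norm (grad (x (Suc k))) powr - c2))"
      using tau_safeguard(2)[OF k] C by (simp add: powr_minus mult.commute)
    ultimately show "tau (Suc k) \<le> \<bar>C\<bar> + inverse c1 * norm (grad (x (Suc k))) powr - c2"
      by (auto simp: max_def split: if_splits)
  qed
qed

lemma tau_le_weight:
  obtains T where "\<And>k. enat k < K \<Longrightarrow> tau k \<le> T * weight k"
proof -
  obtain T where T:
    "\<And>k. enat (Suc k) < K \<Longrightarrow> tau (Suc k) \<le> T + inverse c1 * norm (grad (x (Suc k))) powr - c2"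
    using tau_Suc_le by blast
  have bound: "tau k \<le> (\<bar>T\<bar> + tau 0) + inverse c1 * norm (grad (x k)) powr - c2"
    if k: "enat k < K" for k
  proof -
    have "0 \<le> inverse c1 * norm (grad (x k)) powr - c2" using c1 by simp
    moreover have "tau k \<le> T + inverse c1 * norm (grad (x k)) powr - c2" if "k \<noteq> 0"
      using T k that by (cases k) auto
    ultimately show ?thesis using tau0 abs_ge_self[of T] by (cases "k = 0") auto
  qed
  show thesis
  proof (rule that)
    fix k assume "enat k < K"
    show "tau k \<le> (\<bar>T\<bar> + tau 0 + inverse c1) * weight k"
      by (rule le_mult_max_one[OF bound[OF \<open>enat k < K\<close>]]) (use tau0 c1 in auto)
  qed
qed

lemma inverse_tau_le_weight:
  assumes "0 < c0"
  obtains T where "\<And>k. enat k < K \<Longrightarrow> inverse (tau k) \<le> T * weight k"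
proof -
  have bound:
    "inverse (tau k) \<le> (inverse (tau 0) + inverse c0) + inverse c1 * norm (grad (x k)) powr - c2"
    if k: "enat k < K" for k
  proof (cases k)
    case 0
    then show ?thesis using tau0 c1 assms by simp
  next
    case (Suc j)
    define g where "g = norm (grad (x (Suc j)))"
    have pos: "0 < c1 * g powr c2" using grad_Suc_pos k c1 Suc g_def by simp
    have "min c0 (c1 * g powr c2) \<le> tau k" using tau_safeguard(1) k Suc g_def by simp
    then have "inverse (tau k) \<le> inverse (min c0 (c1 * g powr c2))"
      using pos assms by (intro le_imp_inverse_le) auto
    also have "\<dots> \<le> inverse c0 + inverse (c1 * g powr c2)"
      using pos assms c1 by (auto simp: min_def)
    also have "inverse (c1 * g powr c2) = inverse c1 * g powr - c2" by (simp add: powr_minus)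
    finally have "inverse (tau k) \<le> inverse c0 + inverse c1 * g powr - c2" .
    then show ?thesis using positive_imp_inverse_positive[OF tau0] unfolding Suc g_def by linarith
  qed
  show thesis
  proof (rule that)
    fix k assume "enat k < K"
    show "inverse (tau k) \<le> (inverse (tau 0) + inverse c0 + inverse c1) * weight k"
      by (rule le_mult_max_one[OF bound[OF \<open>enat k < K\<close>]]) (use tau0 c1 assms in auto)
  qed
qed

lemma B_init_le_weight:
  obtains C where "\<And>k. enat k < K \<Longrightarrow> onorm (B_init k) \<le> C * weight k"
proof -
  obtain T where T: "\<And>k. enat k < K \<Longrightarrow> tau k \<le> T * weight k" using tau_le_weight by blast
  obtain M where M: "0 \<le> M" "\<And>k. enat k < K \<Longrightarrow> onorm (S k) \<le> M" using S_norm_bound by blast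
  show thesis
  proof (rule that[of "T + M"])
    fix k assume k: "enat k < K"
    have "M \<le> M * weight k" using M(1) by (simp add: mult_le_cancel_left1)
    moreover have "onorm (B_init k) \<le> tau k + onorm (S k)"
      using scaled_id_plus_props(5)[OF _ _ _ tau_nonneg[OF k]] S_lin[OF k] by blast
    ultimately show "onorm (B_init k) \<le> (T + M) * weight k"
      using T[OF k] M(2)[OF k] by (simp add: distrib_right)
  qed
qed

lemma inv_B_init_le_weight:
  obtains C where "\<And>k. enat k < K \<Longrightarrow> onorm (inv (B_init k)) \<le> C * weight k"
proof (cases "c0 = 0")
  case True
  then obtain M where M: "\<And>k. enat k < K \<Longrightarrow> onorm (inv (B_init k)) \<le> M" using c0_zero by blast
  show thesis
  proof (rule that)
    fix k assume "enat k < K"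
    have "\<bar>M\<bar> \<le> \<bar>M\<bar> * weight k" by (simp add: mult_le_cancel_left1)
    then show "onorm (inv (B_init k)) \<le> \<bar>M\<bar> * weight k"
      using M[OF \<open>enat k < K\<close>] abs_ge_self[of M] by linarith
  qed
next
  case False
  then have "0 < c0" using c0 by simp
  then obtain T where T: "\<And>k. enat k < K \<Longrightarrow> inverse (tau k) \<le> T * weight k"
    using inverse_tau_le_weight by blast
  show thesis
  proof (rule that)
    fix k assume k: "enat k < K"
    have "onorm (inv (B_init k)) \<le> 1 / tau k"
      using psd_invertible_scaled_id_plus(2)[of "S k" "tau k"] S_lin[OF k] tau_pos[OF k \<open>0 < c0\<close>]
      by blast
    then show "onorm (inv (B_init k)) \<le> T * weight k" using T[OF k] by (simp add: inverse_eq_divide)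
  qed
qed

lemma B_le_B_init:
  assumes k: "enat k < K"
  shows "onorm (B k) + onorm (inv (B k)) + 2 * ((L^2 + 1) / cs)
    \<le> (2 + (1 + L / cs)^2) ^ ell
      * (onorm (B_init k) + onorm (inv (B_init k)) + 2 * ((L^2 + 1) / cs))"
proof -
  define A where "A = 2 + (1 + L / cs)^2"
  define D where "D = 2 * ((L^2 + 1) / cs)"
  let ?I = "stored_pairs ell cs s y k"
  have "onorm (B k) + onorm (inv (B k)) + D
      \<le> A ^ card ?I * (onorm (B_init k) + onorm (inv (B_init k)) + D)"
    unfolding B_def[OF k] A_def D_def
    using stored_pairsD y_le_L_s k enat_ord_simps(2) order.strict_trans
    by (intro lbfgs_op_norm_bound[OF finite_stored_pairs psd_invertible_B_init[OF k] cs]) blast+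
  also have "\<dots> \<le> A ^ ell * (onorm (B_init k) + onorm (inv (B_init k)) + D)"
  proof (rule mult_right_mono)
    show "A ^ card ?I \<le> A ^ ell"
      using card_stored_pairs_le unfolding A_def by (intro power_increasing) auto
    have "0 \<le> onorm (B_init k)" "0 \<le> onorm (inv (B_init k))" "0 \<le> D"
      using onorm_pos_le psd_invertibleD(1,4)[OF psd_invertible_B_init[OF k]] cs unfolding D_def
      by auto
    then show "0 \<le> onorm (B_init k) + onorm (inv (B_init k)) + D" by linarith
  qed
  finally show ?thesis unfolding A_def D_def .
qed

lemma B_norm_bound:
  "\<exists>C>0. \<forall>k. enat k < K \<longrightarrow>
     bij (B k) \<and> bounded_linear (inv (B k)) \<and> onorm (B k) + onorm (inv (B k)) \<le> C * weight k"
proof -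
  define A where "A = (2 + (1 + L / cs)^2) ^ ell"
  define D where "D = 2 * ((L^2 + 1) / cs)"
  obtain C1 where C1: "\<And>k. enat k < K \<Longrightarrow> onorm (B_init k) \<le> C1 * weight k"
    using B_init_le_weight by blast
  obtain C2 where C2: "\<And>k. enat k < K \<Longrightarrow> onorm (inv (B_init k)) \<le> C2 * weight k"
    using inv_B_init_le_weight by blast
  have A: "1 \<le> A" and D: "0 \<le> D" unfolding A_def D_def using cs by auto
  have bound: "onorm (B k) + onorm (inv (B k)) \<le> A * (\<bar>C1\<bar> + \<bar>C2\<bar> + D) * weight k"
    if k: "enat k < K" for k
  proof -
    have "C1 * weight k \<le> \<bar>C1\<bar> * weight k" "C2 * weight k \<le> \<bar>C2\<bar> * weight k" "D \<le> D * weight k"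
      using D by (auto intro: mult_right_mono simp: mult_le_cancel_left1)
    then have "onorm (B_init k) + onorm (inv (B_init k)) + D \<le> (\<bar>C1\<bar> + \<bar>C2\<bar> + D) * weight k"
      using C1[OF k] C2[OF k] by (simp add: distrib_right)
    then have "A * (onorm (B_init k) + onorm (inv (B_init k)) + D)
        \<le> A * ((\<bar>C1\<bar> + \<bar>C2\<bar> + D) * weight k)"
      using A by (intro mult_left_mono) auto
    then show ?thesis using B_le_B_init[OF k] D unfolding A_def D_def by simp
  qed
  show ?thesis
  proof (intro exI conjI allI impI)
    have "0 \<le> A * (\<bar>C1\<bar> + \<bar>C2\<bar> + D)" using A D by (intro mult_nonneg_nonneg) auto
    then show "0 < A * (\<bar>C1\<bar> + \<bar>C2\<bar> + D) + 1" by linarith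
    fix k assume k: "enat k < K"
    show "bij (B k)" "bounded_linear (inv (B k))"
      using psd_invertible_B[OF k] unfolding psd_invertible_def by auto
    have "A * (\<bar>C1\<bar> + \<bar>C2\<bar> + D) * weight k \<le> (A * (\<bar>C1\<bar> + \<bar>C2\<bar> + D) + 1) * weight k"
      by (simp add: distrib_right)
    then show "onorm (B k) + onorm (inv (B k)) \<le> (A * (\<bar>C1\<bar> + \<bar>C2\<bar> + D) + 1) * weight k"
      using bound[OF k] by linarith
  qed
qed

end

theorem lemma4p6:
  fixes J :: "'a::{real_inner,complete_space} \<Rightarrow> real"
    and grad :: "'a \<Rightarrow> 'a"
    and x0 :: 'a and eps :: real and ell :: nat
    and c0 cs c1 c2 :: real and C0 :: ereal and L :: real
    and armijo_mode :: bool and variant_g :: bool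
    and beta sigma eta :: real
    and K :: enat
    and x d s y :: "nat \<Rightarrow> 'a"
    and alpha tau :: "nat \<Rightarrow> real"
    and S B :: "nat \<Rightarrow> 'a \<Rightarrow> 'a"
  \<comment> \<open>parameters of the algorithm\<close>
  assumes eps: "eps \<ge> 0" and c0: "c0 \<ge> 0" and C0: "C0 \<ge> ereal c0"
    and cs: "cs > 0" and c1: "c1 > 0" and c2: "c2 > 0"
    and tau0: "tau 0 > 0"
  \<comment> \<open>assumption 1: J is C^1 (gradient grad, Riesz representative) and bounded below\<close>
    and J_diff: "\<And>z. (J has_derivative (\<lambda>h. grad z \<bullet> h)) (at z)"
    and grad_cont: "continuous_on UNIV grad"
    and J_bdd: "bdd_below (range J)"
  \<comment> \<open>assumption 2: gradient Lipschitz on the level set\<close>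
    and L: "L > 0"
    and Lip: "\<And>u v. J u \<le> J x0 \<Longrightarrow> J v \<le> J x0 \<Longrightarrow> norm (grad u - grad v) \<le> L * norm (u - v)"
  \<comment> \<open>line search parameters and assumption 4\<close>
    and beta: "0 < beta" "beta < 1" and sigma: "0 < sigma" "sigma < 1"
    and eta: "\<not> armijo_mode \<Longrightarrow> sigma < eta \<and> eta < 1"
    and unif: "armijo_mode \<Longrightarrow> \<exists>\<delta>>0.
        uniformly_continuous_on {z. \<exists>w. J w \<le> J x0 \<and> dist z w < \<delta>} J \<or>
        uniformly_continuous_on {z. \<exists>w. J w \<le> J x0 \<and> dist z w < \<delta>} grad"
  \<comment> \<open>the iterates: iterations k with k < K are performed (K = \<infinity> if it never stops)\<close>
    and K_pos: "0 < K"
    and x_0: "x 0 = x0"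
    and S_lin: "\<And>k. enat k < K \<Longrightarrow> bounded_linear (S k) \<and> sym_op (S k) \<and> psd_op (S k)"
    and S_bdd: "\<exists>M. \<forall>k. enat k < K \<longrightarrow> onorm (S k) \<le> M"
    and B_def: "\<And>k. enat k < K \<Longrightarrow>
        B k = lbfgs_op (\<lambda>v. tau k *\<^sub>R v + S k v) s y (stored_pairs ell cs s y k)"
    and d_def: "\<And>k. enat k < K \<Longrightarrow> d k = - inv (B k) (grad (x k))"
    and alpha_pos: "\<And>k. enat k < K \<Longrightarrow> alpha k > 0"
    and armijo_ls: "\<And>k. enat k < K \<Longrightarrow> armijo_mode \<Longrightarrow>
        \<exists>i::nat. alpha k = beta ^ i \<and>
          J (x k + alpha k *\<^sub>R d k) \<le> J (x k) + alpha k * sigma * (grad (x k) \<bullet> d k) \<and>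
          (\<forall>i'<i. \<not> (J (x k + beta ^ i' *\<^sub>R d k) \<le> J (x k) + beta ^ i' * sigma * (grad (x k) \<bullet> d k)))"
    and wolfe_ls: "\<And>k. enat k < K \<Longrightarrow> \<not> armijo_mode \<Longrightarrow>
        J (x k + alpha k *\<^sub>R d k) \<le> J (x k) + alpha k * sigma * (grad (x k) \<bullet> d k) \<and>
        grad (x k + alpha k *\<^sub>R d k) \<bullet> d k \<ge> eta * (grad (x k) \<bullet> d k)"
    and s_def: "\<And>k. enat k < K \<Longrightarrow> s k = alpha k *\<^sub>R d k"
    and x_Suc: "\<And>k. enat k < K \<Longrightarrow> x (Suc k) = x k + s k"
    and y_def: "\<And>k. enat k < K \<Longrightarrow> y k = grad (x (Suc k)) - grad (x k)"
    and stop: "\<And>k. enat k < K \<Longrightarrow> (norm (grad (x (Suc k))) \<le> eps \<longleftrightarrow> enat (Suc k) = K)"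
    and tau_upd: "\<And>k. enat (Suc k) < K \<Longrightarrow>
        (let z = y k - S (Suc k) (s k); \<rho> = z \<bullet> s k;
             g = norm (grad (x (Suc k)));
             wl = ereal (min c0 (c1 * g powr c2));
             wu = max C0 (ereal (inverse (c1 * g powr c2)));
             ts = proj_box wl wu (ereal (\<rho> / (norm (s k))\<^sup>2));
             tg = proj_box wl wu (ereal (norm z / norm (s k)));
             tz = proj_box wl wu (ereal ((norm z)\<^sup>2 / \<rho>))
         in if \<rho> > 0 \<and> \<not> variant_g then ts \<le> ereal (tau (Suc k)) \<and> ereal (tau (Suc k)) \<le> tz
            else ts \<le> ereal (tau (Suc k)) \<and> ereal (tau (Suc k)) \<le> tg)"
  \<comment> \<open>assumption 5\<close>
    and c0_zero: "c0 = 0 \<Longrightarrow> \<exists>M. \<forall>k. enat k < K \<longrightarrow>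
        bij (\<lambda>v. tau k *\<^sub>R v + S k v) \<and> bounded_linear (inv (\<lambda>v. tau k *\<^sub>R v + S k v)) \<and>
        onorm (inv (\<lambda>v. tau k *\<^sub>R v + S k v)) \<le> M"
  \<comment> \<open>assumption 6 (variant_g = the interval [tau^s,tau^z] replaced by [tau^s,tau^g])\<close>
    and C0_inf: "C0 = \<infinity> \<Longrightarrow> variant_g \<or>
        (\<exists>H :: 'a \<Rightarrow> ('a \<Rightarrow>\<^sub>L 'a).
          (\<forall>z. (grad has_derivative blinfun_apply (H z)) (at z)) \<and> continuous_on UNIV H \<and>
          (\<exists>M. \<forall>k. enat (Suc k) < K \<longrightarrow>
             (let G = (\<lambda>v. blinfun_apply (integral {0..1} (\<lambda>t. H (x k + t *\<^sub>R s k))) v - S (Suc k) v)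
              in sym_op G \<and> psd_op G \<and> onorm G \<le> M)))"
  shows "\<exists>C>0. \<forall>k. enat k < K \<longrightarrow>
           bij (B k) \<and> bounded_linear (inv (B k)) \<and>
           onorm (B k) + onorm (inv (B k)) \<le> C * max 1 (norm (grad (x k)) powr (- c2))"
proof -
  have sufficient_decrease:
    "J (x k + alpha k *\<^sub>R d k) \<le> J (x k) + alpha k * sigma * (grad (x k) \<bullet> d k)"
    if "enat k < K" for k
    using armijo_ls[OF that] wolfe_ls[OF that] by (cases armijo_mode) auto
  interpret slbfgs J grad x0 eps ell c0 cs c1 c2 C0 L sigma variant_g K x d s y alpha tau S B
    using eps c0 C0 cs c1 tau0 L sigma(1) Lip K_pos x_0 S_lin S_bdd B_def d_def alpha_pos
      sufficient_decrease s_def x_Suc y_def stop tau_upd c0_zero C0_inf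
    by unfold_locales
  show ?thesis by (rule B_norm_bound)
qed

end
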